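(* Let $z_1,z_2,\dots$ be i.i.d. standard normal random variables, let $I_1,I_2$ be positive integers, and set $N_1=I_1$, $N_2=I_1+I_2$. Let $r_1,r_2>0$ and define the events $\zeta_1=\{\sum_{j=1}^{N_1} z_j^2>r_1^2\}$ and $\zeta_2=\{\sum_{j=1}^{N_2} z_j^2>r_2^2\}$. Then $$\Pr(\zeta_1\cap\zeta_2)\le \inf_{0\le u<1/2}\frac{e^{-u r_2^2}\,\Pr\left(\chi^2_{I_1}>(1-2u)r_1^2\right)}{(1-2u)^{N_2/2}},$$ and $$\Pr(\zeta_1\cap\zeta_2)\ge \max\left(\Pr(\zeta_1)-w_1,\ \Pr(\zeta_2)-w_2\right),$$ where $$w_1=\inf_{v\ge 0}\frac{e^{v r_2^2}\,\Pr\left(\chi^2_{I_1}>(1+2v)r_1^2\right)}{(1+2v)^{N_2/2}},\qquad w_2=\inf_{0\le v<1/2}\frac{e^{-v r_2^2}\,\Pr\left(\chi^2_{I_1}\le(1-2v)r_1^2\right)}{(1-2v)^{N_2/2}}.$$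
   Context: For a positive integer $k$, $\chi^2_k$ denotes a random variable with the central chi-square distribution with $k$ degrees of freedom; thus $\Pr(\zeta_i)=\Pr(\chi^2_{N_i}>r_i^2)$. *)

theory Defs
  imports "HOL-Probability.Probability"
begin

definition chi2_density :: "nat \<Rightarrow> real \<Rightarrow> real" where
  "chi2_density k x =
     (if x > 0 then x powr (real k / 2 - 1) * exp (- x / 2) / (2 powr (real k / 2) * Gamma (real k / 2))
      else 0)"

definition chi2_distr :: "nat \<Rightarrow> real measure" where
  "chi2_distr k = density lborel (\<lambda>x. ennreal (chi2_density k x))"

definition chi2_gt :: "nat \<Rightarrow> real \<Rightarrow> real" where
  "chi2_gt k t = measure (chi2_distr k) {t<..}"

definition chi2_le :: "nat \<Rightarrow> real \<Rightarrow> real" where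
  "chi2_le k t = measure (chi2_distr k) {..t}"

end

theory Submission
  imports Defs
begin

text \<open>Let \<open>S\<close> and \<open>T\<close> be the sums of squares over \<open>{1..I1}\<close> and \<open>{I1+1..N2}\<close>; they are
  independent with laws \<open>\<chi>\<^sup>2(I1)\<close> and \<open>\<chi>\<^sup>2(I2)\<close>. Each of the events \<open>\<zeta>1 \<inter> \<zeta>2\<close>,
  \<open>\<zeta>1 - \<zeta>2\<close> and \<open>\<zeta>2 - \<zeta>1\<close> lies in a set \<open>{S \<in> A, t (S + T - r2\<^sup>2) \<ge> 0}\<close> for a suitable
  sign of \<open>t\<close>, on which the Chernoff weight \<open>exp (t (S + T - r2\<^sup>2))\<close> is at least 1. Integrating
  this weight against the product density, the factor \<open>exp (t T)\<close> contributes the moment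
  generating function \<open>(1 - 2 t) powr (- I2 / 2)\<close>, while \<open>exp (t S)\<close> turns the \<open>\<chi>\<^sup>2(I1)\<close>
  density into \<open>(1 - 2 t) powr (- I1 / 2)\<close> times the density of \<open>\<chi>\<^sup>2(I1) / (1 - 2 t)\<close>. This gives
  the three infimum bounds, and the lower bounds follow from
  \<open>P(\<zeta>1 \<inter> \<zeta>2) = P(\<zeta>i) - P(\<zeta>i - \<zeta>j)\<close>.\<close>

text \<open>The Gamma density with shape \<open>a\<close> and scale 2. Real shapes are needed because convolution
  adds shapes, starting from \<open>1/2\<close> for one squared standard normal.\<close>

definition gamma2_density :: "real \<Rightarrow> real \<Rightarrow> real" where
  "gamma2_density a x =
     (if x > 0 then x powr (a - 1) * exp (- x / 2) / (2 powr a * Gamma a) else 0)"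

lemma chi2_density_eq_gamma2_density: "chi2_density k = gamma2_density (real k / 2)"
  by (simp add: fun_eq_iff chi2_density_def gamma2_density_def)

lemma gamma2_density_nonneg: "a > 0 \<Longrightarrow> gamma2_density a x \<ge> 0"
  by (auto simp: gamma2_density_def Gamma_real_pos intro!: divide_nonneg_pos)

lemma borel_measurable_gamma2_density[measurable]: "gamma2_density a \<in> borel_measurable borel"
  unfolding gamma2_density_def by measurable

lemma nn_integral_gamma2_density:
  assumes a: "a > 0"
  shows "(\<integral>\<^sup>+x. ennreal (gamma2_density a x) \<partial>lborel) = 1"
proof -
  have G: "Gamma a > 0" using a by (rule Gamma_real_pos)
  have "(\<integral>\<^sup>+x. ennreal (gamma2_density a x) \<partial>lborel)
      = ennreal \<bar>2\<bar> * (\<integral>\<^sup>+x. ennreal (gamma2_density a (0 + 2 * x)) \<partial>lborel)"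
    by (rule nn_integral_real_affine) auto
  also have "(\<lambda>x. ennreal (gamma2_density a (0 + 2 * x)))
      = (\<lambda>x. ennreal (1 / (2 * Gamma a)) * ennreal (indicator {0..} x * x powr (a - 1) / exp x))"
  proof
    fix x :: real
    show "ennreal (gamma2_density a (0 + 2 * x))
        = ennreal (1 / (2 * Gamma a)) * ennreal (indicator {0..} x * x powr (a - 1) / exp x)"
    proof (cases "x > 0")
      case True
      have "gamma2_density a (2 * x) = 2 powr (a - 1) * x powr (a - 1) * exp (- x) / (2 powr a * Gamma a)"
        using True by (simp add: gamma2_density_def powr_mult)
      also have "\<dots> = (1 / (2 * Gamma a)) * (x powr (a - 1) / exp x)"
        using G by (simp add: powr_diff field_simps exp_minus)
      finally show ?thesis using True G by (simp add: ennreal_mult'[symmetric])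
    qed (auto simp: gamma2_density_def indicator_def)
  qed
  also have "(\<integral>\<^sup>+x. ennreal (1 / (2 * Gamma a)) * ennreal (indicator {0..} x * x powr (a - 1) / exp x) \<partial>lborel)
      = ennreal (1 / (2 * Gamma a)) * ennreal (Gamma a)"
    by (subst nn_integral_cmult) (auto simp: Gamma_conv_nn_integral_real[OF a])
  also have "ennreal (1 / (2 * Gamma a)) * ennreal (Gamma a) = ennreal (1 / 2)"
    using G by (subst ennreal_mult[symmetric]) auto
  also have "ennreal \<bar>2\<bar> * ennreal (1 / 2) = ennreal (2 * (1 / 2))"
    by (subst ennreal_mult[symmetric]) auto
  finally show ?thesis by simp
qed

lemma nn_integral_gamma2_density_indicator_finite:
  assumes a: "a > 0"
  shows "(\<integral>\<^sup>+x. ennreal (gamma2_density a x) * indicator A x \<partial>lborel) \<noteq> \<top>"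
proof -
  have "(\<integral>\<^sup>+x. ennreal (gamma2_density a x) * indicator A x \<partial>lborel) \<le> (\<integral>\<^sup>+x. ennreal (gamma2_density a x) \<partial>lborel)"
    by (rule nn_integral_mono) (simp add: indicator_def)
  then show ?thesis using a by (metis nn_integral_gamma2_density ennreal_one_neq_top neq_top_trans)
qed

lemma nn_integral_chi2_density_indicator:
  assumes "k > 0" and [measurable]: "A \<in> sets borel"
  shows "(\<integral>\<^sup>+x. ennreal (chi2_density k x) * indicator A x \<partial>lborel) = ennreal (measure (chi2_distr k) A)"
proof -
  have "emeasure (chi2_distr k) A = (\<integral>\<^sup>+x. ennreal (chi2_density k x) * indicator A x \<partial>lborel)"
    unfolding chi2_distr_def chi2_density_eq_gamma2_density by (subst emeasure_density) auto
  then show ?thesis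
    using nn_integral_gamma2_density_indicator_finite[of "real k / 2" A] assms(1)
    by (simp add: measure_def ennreal_enn2real_if chi2_density_eq_gamma2_density)
qed

lemma gamma2_density_tilt:
  assumes t: "2 * t < 1"
  shows "(1 - 2 * t) powr (- a) * (1 - 2 * t) * gamma2_density a ((1 - 2 * t) * x)
       = gamma2_density a x * exp (t * x)"
proof (cases "x > 0")
  case True
  define s where "s = 1 - 2 * t"
  have s: "s > 0" using t by (simp add: s_def)
  have "s powr (- a) * s * gamma2_density a (s * x)
      = (s powr (- a) * s * s powr (a - 1)) * (x powr (a - 1) * exp (- (s * x) / 2) / (2 powr a * Gamma a))"
    using True s by (simp add: gamma2_density_def powr_mult)
  also have "s powr (- a) * s * s powr (a - 1) = 1"
    using s by (simp add: powr_add[symmetric] powr_minus powr_diff field_simps)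
  also have "exp (- (s * x) / 2) = exp (- x / 2) * exp (t * x)"
    by (simp add: s_def exp_add[symmetric] field_simps)
  finally show ?thesis using True by (simp add: gamma2_density_def s_def)
next
  case False
  then show ?thesis using t by (simp add: gamma2_density_def zero_less_mult_iff)
qed

text \<open>Exponential tilting by \<open>exp (t x)\<close> turns the Gamma density with scale 2 into one with
  scale \<open>2 / (1 - 2 t)\<close>.\<close>

lemma nn_integral_gamma2_density_tilted:
  assumes a: "a > 0" and t: "2 * t < 1" and [measurable]: "h \<in> borel_measurable borel"
  shows "(\<integral>\<^sup>+x. ennreal (gamma2_density a x * exp (t * x)) * h ((1 - 2 * t) * x) \<partial>lborel)
       = ennreal ((1 - 2 * t) powr (- a)) * (\<integral>\<^sup>+y. ennreal (gamma2_density a y) * h y \<partial>lborel)"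
proof -
  define s where "s = 1 - 2 * t"
  have s: "s > 0" using t by (simp add: s_def)
  have "ennreal (s powr (- a)) * (\<integral>\<^sup>+y. ennreal (gamma2_density a y) * h y \<partial>lborel)
      = ennreal (s powr (- a)) * (ennreal s * (\<integral>\<^sup>+x. ennreal (gamma2_density a (s * x)) * h (s * x) \<partial>lborel))"
    using s nn_integral_real_affine[of "\<lambda>y. ennreal (gamma2_density a y) * h y" s 0] by simp
  also have "\<dots> = (\<integral>\<^sup>+x. ennreal (s powr (- a) * s * gamma2_density a (s * x)) * h (s * x) \<partial>lborel)"
    using s gamma2_density_nonneg[OF a]
    by (simp add: nn_integral_cmult ennreal_mult mult.assoc)
  also have "\<dots> = (\<integral>\<^sup>+x. ennreal (gamma2_density a x * exp (t * x)) * h (s * x) \<partial>lborel)"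
    unfolding s_def gamma2_density_tilt[OF t] ..
  finally show ?thesis by (simp add: s_def)
qed

lemma nn_integral_gamma2_density_exp:
  "a > 0 \<Longrightarrow> 2 * t < 1 \<Longrightarrow>
     (\<integral>\<^sup>+x. ennreal (gamma2_density a x * exp (t * x)) \<partial>lborel) = ennreal ((1 - 2 * t) powr (- a))"
  using nn_integral_gamma2_density_tilted[of a t "\<lambda>_. 1"] by (simp add: nn_integral_gamma2_density)

lemma gamma2_density_conv_integrand:
  assumes a: "a > 0" and b: "b > 0" and x: "x > 0"
  shows "gamma2_density a (x - x * t) * gamma2_density b (x * t)
       = (x powr (a + b - 2) * exp (- x / 2) / (2 powr a * Gamma a * (2 powr b * Gamma b)))
         * (indicator {0..1} t * (t powr (b - 1) * (1 - t) powr (a - 1)))"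
proof (cases "0 < t \<and> t < 1")
  case True
  have pos: "x - x * t > 0" "x * t > 0" using True x by (simp_all add: algebra_simps)
  have "gamma2_density a (x - x * t) * gamma2_density b (x * t)
      = (x powr (a - 1) * x powr (b - 1)) * (exp (- (x - x * t) / 2) * exp (- (x * t) / 2))
        / (2 powr a * Gamma a * (2 powr b * Gamma b)) * (t powr (b - 1) * (1 - t) powr (a - 1))"
  proof -
    have "(x - x * t) powr (a - 1) = x powr (a - 1) * (1 - t) powr (a - 1)"
      using True x by (simp add: powr_mult[symmetric] algebra_simps)
    moreover have "(x * t) powr (b - 1) = x powr (b - 1) * t powr (b - 1)"
      using True x by (simp add: powr_mult)
    ultimately show ?thesis
      using pos by (simp add: gamma2_density_def field_simps)
  qed
  also have "x powr (a - 1) * x powr (b - 1) = x powr (a + b - 2)"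
    by (simp add: powr_add[symmetric])
  also have "exp (- (x - x * t) / 2) * exp (- (x * t) / 2) = exp (- x / 2)"
    by (simp add: exp_add[symmetric] field_simps)
  finally show ?thesis using True by simp
next
  case False
  then consider "t \<le> 0" | "t \<ge> 1" by linarith
  then show ?thesis
  proof cases
    case 1
    then show ?thesis using x
      by (cases "t = 0") (auto simp: gamma2_density_def indicator_def mult_nonneg_nonpos not_less zero_less_mult_iff)
  next
    case 2
    then show ?thesis using x
      by (cases "t = 1") (auto simp: gamma2_density_def indicator_def not_less mult_le_cancel_left1)
  qed
qed

text \<open>Substituting \<open>y = x t\<close> reduces the convolution integral to a Beta integral.\<close>

lemma gamma2_density_convolution:
  assumes a: "a > 0" and b: "b > 0"
  shows "(\<integral>\<^sup>+y. ennreal (gamma2_density a (x - y)) * ennreal (gamma2_density b y) \<partial>lborel)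
       = ennreal (gamma2_density (a + b) x)"
proof (cases "x > 0")
  case False
  have "(\<integral>\<^sup>+y. ennreal (gamma2_density a (x - y)) * ennreal (gamma2_density b y) \<partial>lborel)
      = (\<integral>\<^sup>+(y::real). 0 \<partial>lborel)"
    by (rule nn_integral_cong) (use False in \<open>auto simp: gamma2_density_def\<close>)
  then show ?thesis using False by (simp add: gamma2_density_def)
next
  case x: True
  define K where "K = x powr (a + b - 2) * exp (- x / 2) / (2 powr a * Gamma a * (2 powr b * Gamma b))"
  have K: "K \<ge> 0" using a b unfolding K_def by (auto intro!: divide_nonneg_pos mult_pos_pos Gamma_real_pos)
  have B: "Beta b a \<ge> 0" using a b by (simp add: Beta_def Gamma_real_pos less_imp_le)
  have "(\<integral>\<^sup>+y. ennreal (gamma2_density a (x - y)) * ennreal (gamma2_density b y) \<partial>lborel)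
      = ennreal x * (\<integral>\<^sup>+t. ennreal (gamma2_density a (x - x * t)) * ennreal (gamma2_density b (x * t)) \<partial>lborel)"
    using x nn_integral_real_affine[of "\<lambda>y. ennreal (gamma2_density a (x - y)) * ennreal (gamma2_density b y)" x 0]
    by simp
  also have "(\<integral>\<^sup>+t. ennreal (gamma2_density a (x - x * t)) * ennreal (gamma2_density b (x * t)) \<partial>lborel)
      = (\<integral>\<^sup>+t. ennreal K * ennreal (indicator {0..1} t * (t powr (b - 1) * (1 - t) powr (a - 1))) \<partial>lborel)"
    using gamma2_density_conv_integrand[OF a b x] gamma2_density_nonneg a b K
    by (intro nn_integral_cong) (simp add: ennreal_mult[symmetric] K_def)
  also have "\<dots> = ennreal K * ennreal (Beta b a)"
    using nn_integral_has_integral_lebesgue[OF _ has_integral_Beta_real[OF b a]]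
    by (subst nn_integral_cmult) auto
  also have "ennreal x * (ennreal K * ennreal (Beta b a)) = ennreal (x * K * Beta b a)"
    using x K B by (simp add: ennreal_mult mult.assoc)
  also have "x * K * Beta b a = gamma2_density (a + b) x"
  proof -
    have "x * x powr (a + b - 2) = x powr (a + b - 1)"
      using x by (simp add: powr_add[symmetric] powr_diff power2_eq_square)
    moreover have "2 powr a * 2 powr b = (2::real) powr (a + b)" by (simp add: powr_add)
    moreover have "Gamma a > 0" "Gamma b > 0" "Gamma (a + b) > 0"
      using a b by (auto intro!: Gamma_real_pos)
    ultimately show ?thesis
      using x unfolding K_def Beta_def gamma2_density_def by (simp add: field_simps)
  qed
  finally show ?thesis .
qed

lemma nn_integral_even:
  fixes f :: "real \<Rightarrow> ennreal"
  assumes [measurable]: "f \<in> borel_measurable borel" and even: "\<And>x. f (- x) = f x"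
  shows "(\<integral>\<^sup>+x. f x \<partial>lborel) = 2 * (\<integral>\<^sup>+x. f x * indicator {0..} x \<partial>lborel)"
proof -
  have "(\<integral>\<^sup>+x. f x \<partial>lborel) = (\<integral>\<^sup>+x. f x * indicator {0..} x + f x * indicator {..<0} x \<partial>lborel)"
    by (rule nn_integral_cong) (simp add: indicator_def)
  also have "\<dots> = (\<integral>\<^sup>+x. f x * indicator {0..} x \<partial>lborel) + (\<integral>\<^sup>+x. f x * indicator {..<0} x \<partial>lborel)"
    by (rule nn_integral_add) auto
  also have "(\<integral>\<^sup>+x. f x * indicator {..<0} x \<partial>lborel) = (\<integral>\<^sup>+x. f x * indicator {0<..} x \<partial>lborel)"
    using nn_integral_real_affine[of "\<lambda>x. f x * indicator {..<0} x" "-1" 0]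
    by (simp add: even indicator_def)
  also have "\<dots> = (\<integral>\<^sup>+x. f x * indicator {0..} x \<partial>lborel)"
    by (rule nn_integral_cong_AE, rule AE_mp[OF AE_lborel_singleton[of 0]], rule AE_I2)
       (auto simp: indicator_def)
  finally show ?thesis by (simp add: mult_2)
qed

lemma gamma2_density_half_square:
  assumes x: "x > 0"
  shows "gamma2_density (1/2) (x\<^sup>2) * (2 * x) = 2 * std_normal_density x"
proof -
  have "(x\<^sup>2) powr (1/2 - 1) = 1 / x"
    using x by (simp add: powr_minus_divide powr_half_sqrt powr_power[symmetric] flip: powr_powr)
  moreover have "(2::real) powr (1/2) = sqrt 2" by (simp add: powr_half_sqrt)
  ultimately show ?thesis using x
    by (simp add: gamma2_density_def std_normal_density_def Gamma_one_half_real real_sqrt_mult field_simps)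
qed

lemma nn_integral_std_normal_square_le:
  "(\<integral>\<^sup>+x. ennreal (std_normal_density x) * indicator {x. x\<^sup>2 \<le> a} x \<partial>lborel)
     = (\<integral>\<^sup>+y. ennreal (gamma2_density (1/2) y) * indicator {..a} y \<partial>lborel)"
proof (cases "a > 0")
  case False
  have "(\<integral>\<^sup>+x. ennreal (std_normal_density x) * indicator {x. x\<^sup>2 \<le> a} x \<partial>lborel) = 0"
    by (rule nn_integral_zero', rule AE_mp[OF AE_lborel_singleton[of 0]], rule AE_I2)
       (use False in \<open>auto simp: indicator_def dest!: zero_less_power2[THEN iffD2]\<close>)
  moreover have "(\<integral>\<^sup>+y. ennreal (gamma2_density (1/2) y) * indicator {..a} y \<partial>lborel) = 0"
    using False by (intro nn_integral_zero' AE_I2) (auto simp: gamma2_density_def indicator_def)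
  ultimately show ?thesis by simp
next
  case True
  define r where "r = sqrt a"
  have r: "r > 0" "r\<^sup>2 = a" using True by (auto simp: r_def)
  have le_r: "x\<^sup>2 \<le> a \<longleftrightarrow> x \<le> r" if "x \<ge> 0" for x
    using that r abs_le_square_iff[of x r] by simp
  have "(\<integral>\<^sup>+x. ennreal (std_normal_density x) * indicator {x. x\<^sup>2 \<le> a} x \<partial>lborel)
      = 2 * (\<integral>\<^sup>+x. ennreal (std_normal_density x) * indicator {x. x\<^sup>2 \<le> a} x * indicator {0..} x \<partial>lborel)"
    by (rule nn_integral_even) (auto simp: std_normal_density_def indicator_def)
  also have "\<dots> = 2 * (\<integral>\<^sup>+x. ennreal (std_normal_density x) * indicator {0..r} x \<partial>lborel)"
    by (rule arg_cong[where f = "(*) 2"], rule nn_integral_cong) (simp split: split_indicator add: le_r)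
  also have "\<dots> = (\<integral>\<^sup>+x. ennreal (2 * std_normal_density x) * indicator {0..r} x \<partial>lborel)"
    by (subst nn_integral_cmult[symmetric]) (auto simp: ennreal_mult mult.assoc)
  also have "\<dots> = (\<integral>\<^sup>+x. ennreal (gamma2_density (1/2) (x\<^sup>2)) * ennreal (2 * x) * indicator {0..r} x \<partial>lborel)"
  proof (rule nn_integral_cong_AE, rule AE_mp[OF AE_lborel_singleton[of 0]], rule AE_I2, intro impI)
    fix x :: real
    assume "x \<noteq> 0"
    then show "ennreal (2 * std_normal_density x) * indicator {0..r} x
        = ennreal (gamma2_density (1/2) (x\<^sup>2)) * ennreal (2 * x) * indicator {0..r} x"
      using gamma2_density_half_square[of x] gamma2_density_nonneg[of "1/2" "x\<^sup>2"]
      by (cases "x > 0") (auto simp: indicator_def ennreal_mult'[symmetric])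
  qed
  also have "\<dots> = (\<integral>\<^sup>+y. ennreal (gamma2_density (1/2) y) * indicator {0\<^sup>2..r\<^sup>2} y \<partial>lborel)"
    by (rule nn_integral_substitution_aux[symmetric, where g = "\<lambda>x. x\<^sup>2" and g' = "\<lambda>x. 2 * x"])
       (auto intro!: derivative_eq_intros continuous_intros simp: r)
  also have "\<dots> = (\<integral>\<^sup>+y. ennreal (gamma2_density (1/2) y) * indicator {..a} y \<partial>lborel)"
    by (rule nn_integral_cong) (auto simp: indicator_def gamma2_density_def r)
  finally show ?thesis .
qed

lemma (in prob_space) distributed_square_std_normal:
  assumes Z: "distributed M lborel Z (\<lambda>x. ennreal (std_normal_density x))"
  shows "distributed M lborel (\<lambda>\<omega>. (Z \<omega>)\<^sup>2) (\<lambda>x. ennreal (chi2_density 1 x))"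
proof -
  define F where "F a = (\<integral>\<^sup>+y. ennreal (gamma2_density (1/2) y) * indicator {..a} y \<partial>lborel)" for a
  have F: "F a = ennreal (enn2real (F a))" for a
    using nn_integral_gamma2_density_indicator_finite[of "1/2" "{..a}"]
    by (simp add: F_def ennreal_enn2real_if)
  have [measurable]: "Z \<in> borel_measurable M" using distributed_measurable[OF Z] by simp
  have "distributed M lborel (\<lambda>\<omega>. (Z \<omega>)\<^sup>2) (\<lambda>x. ennreal (gamma2_density (1/2) x))"
  proof (rule distributedI_borel_atMost[where g = "\<lambda>a. enn2real (F a)"])
    show "AE x in lborel. 0 \<le> gamma2_density (1/2) x" by (simp add: gamma2_density_nonneg)
    fix a :: real
    have "(\<integral>\<^sup>+x. ennreal (gamma2_density (1/2) x * indicator {..a} x) \<partial>lborel) = F a"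
      unfolding F_def by (rule nn_integral_cong) (simp add: indicator_def)
    with F show "(\<integral>\<^sup>+x. ennreal (gamma2_density (1/2) x * indicator {..a} x) \<partial>lborel) = ennreal (enn2real (F a))"
      by simp
    have "emeasure M {\<omega> \<in> space M. (Z \<omega>)\<^sup>2 \<le> a} = emeasure M (Z -` {x. x\<^sup>2 \<le> a} \<inter> space M)"
      by (rule arg_cong[where f = "emeasure M"]) auto
    also have "\<dots> = (\<integral>\<^sup>+x. ennreal (std_normal_density x) * indicator {x. x\<^sup>2 \<le> a} x \<partial>lborel)"
      by (rule distributed_emeasure[OF Z]) simp
    also have "\<dots> = F a"
      unfolding F_def by (rule nn_integral_std_normal_square_le)
    finally show "emeasure M {\<omega> \<in> space M. (Z \<omega>)\<^sup>2 \<le> a} = ennreal (enn2real (F a))"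
      using F by simp
  qed simp_all
  then show ?thesis by (simp add: chi2_density_eq_gamma2_density)
qed

lemma (in prob_space) distributed_sum_squares_std_normal:
  assumes "finite J" and "J \<noteq> {}" and ind: "indep_vars (\<lambda>_. borel) z J"
    and norm: "\<And>i. i \<in> J \<Longrightarrow> distributed M lborel (z i) (\<lambda>x. ennreal (std_normal_density x))"
  shows "distributed M lborel (\<lambda>\<omega>. \<Sum>i\<in>J. (z i \<omega>)\<^sup>2) (\<lambda>x. ennreal (chi2_density (card J) x))"
proof -
  have ind_sq: "indep_vars (\<lambda>_. borel) (\<lambda>i \<omega>. (z i \<omega>)\<^sup>2) J"
    using ind by (rule indep_vars_compose2[where Y = "\<lambda>_ x. x\<^sup>2"]) auto
  have sq: "distributed M lborel (\<lambda>\<omega>. (z i \<omega>)\<^sup>2) (\<lambda>x. ennreal (gamma2_density (1/2) x))" if "i \<in> J" for i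
    using distributed_square_std_normal[OF norm[OF that]] by (simp add: chi2_density_eq_gamma2_density)
  from assms(1,2) ind_sq sq
  have "distributed M lborel (\<lambda>\<omega>. \<Sum>i\<in>J. (z i \<omega>)\<^sup>2) (\<lambda>x. ennreal (gamma2_density (real (card J) / 2) x))"
  proof (induction rule: finite_ne_induct)
    case (singleton i)
    then show ?case by auto
  next
    case (insert i I)
    have "distributed M lborel (\<lambda>\<omega>. (z i \<omega>)\<^sup>2 + (\<Sum>j\<in>I. (z j \<omega>)\<^sup>2))
        (\<lambda>x. \<integral>\<^sup>+y. ennreal (gamma2_density (1/2) (x - y)) * ennreal (gamma2_density (real (card I) / 2) y) \<partial>lborel)"
      using insert by (intro distributed_convolution indep_vars_sum) (auto intro: indep_vars_subset)
    also have "(\<lambda>x. \<integral>\<^sup>+y. ennreal (gamma2_density (1/2) (x - y)) * ennreal (gamma2_density (real (card I) / 2) y) \<partial>lborel)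
        = (\<lambda>x. ennreal (gamma2_density (1/2 + real (card I) / 2) x))"
      using insert by (simp add: gamma2_density_convolution card_gt_0_iff)
    also have "1/2 + real (card I) / 2 = real (card (insert i I)) / 2"
      using insert by (simp add: field_simps)
    finally show ?case using insert by simp
  qed
  then show ?thesis by (simp add: chi2_density_eq_gamma2_density)
qed

lemma (in prob_space) indep_var_sum_squares:
  fixes z :: "'i \<Rightarrow> 'a \<Rightarrow> real"
  assumes ind: "indep_vars (\<lambda>_. borel) z I" and "A \<subseteq> I" "B \<subseteq> I" "A \<inter> B = {}"
  shows "indep_var lborel (\<lambda>\<omega>. \<Sum>i\<in>A. (z i \<omega>)\<^sup>2) lborel (\<lambda>\<omega>. \<Sum>i\<in>B. (z i \<omega>)\<^sup>2)"
proof -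
  have "indep_var lborel ((\<lambda>f. \<Sum>i\<in>A. (f i)\<^sup>2) \<circ> (\<lambda>\<omega>. restrict (\<lambda>i. z i \<omega>) A))
                  lborel ((\<lambda>f. \<Sum>i\<in>B. (f i)\<^sup>2) \<circ> (\<lambda>\<omega>. restrict (\<lambda>i. z i \<omega>) B))"
    using assms by (intro indep_var_compose[OF indep_var_restrict[OF ind]]) auto
  then show ?thesis by (simp add: o_def)
qed

lemma (in prob_space) nn_integral_indep_pair:
  assumes ind: "indep_var lborel S lborel T"
    and dS: "distributed M lborel S f" and dT: "distributed M lborel T g"
    and [measurable]: "H \<in> borel_measurable (lborel \<Otimes>\<^sub>M lborel)"
  shows "(\<integral>\<^sup>+\<omega>. H (S \<omega>, T \<omega>) \<partial>M) = (\<integral>\<^sup>+x. f x * (\<integral>\<^sup>+y. g y * H (x, y) \<partial>lborel) \<partial>lborel)"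
proof -
  have [measurable]: "f \<in> borel_measurable lborel" "g \<in> borel_measurable lborel"
    using distributed_borel_measurable[OF dS] distributed_borel_measurable[OF dT] by auto
  have "distributed M (lborel \<Otimes>\<^sub>M lborel) (\<lambda>\<omega>. (S \<omega>, T \<omega>)) (\<lambda>(x, y). f x * g y)"
    by (rule distributed_joint_indep[OF sigma_finite_lborel sigma_finite_lborel dS dT ind])
  then have "(\<integral>\<^sup>+\<omega>. H (S \<omega>, T \<omega>) \<partial>M) = (\<integral>\<^sup>+p. (\<lambda>(x, y). f x * g y) p * H p \<partial>(lborel \<Otimes>\<^sub>M lborel))"
    by (rule distributed_nn_integral[symmetric]) measurable
  also have "\<dots> = (\<integral>\<^sup>+x. \<integral>\<^sup>+y. f x * g y * H (x, y) \<partial>lborel \<partial>lborel)"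
    by (subst lborel.nn_integral_fst[symmetric]) (auto simp: case_prod_unfold)
  also have "\<dots> = (\<integral>\<^sup>+x. f x * (\<integral>\<^sup>+y. g y * H (x, y) \<partial>lborel) \<partial>lborel)"
    by (rule nn_integral_cong) (simp add: nn_integral_cmult[symmetric] mult.assoc)
  finally show ?thesis .
qed

lemma nn_integral_gamma2_density_section_le:
  assumes b: "b > 0" and t: "2 * t < 1"
    and Q: "\<And>y. (x, y) \<in> Q \<Longrightarrow> (1 - 2 * t) * x \<in> B \<and> 0 \<le> t * (x + y - c)"
  shows "(\<integral>\<^sup>+y. ennreal (gamma2_density b y) * indicator Q (x, y) \<partial>lborel)
       \<le> ennreal (exp (- t * c) * (1 - 2 * t) powr (- b) * exp (t * x)) * indicator B ((1 - 2 * t) * x)"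
proof -
  define s where "s = 1 - 2 * t"
  have "ennreal (gamma2_density b y) * indicator Q (x, y)
      \<le> ennreal (exp (- t * c) * exp (t * x)) * indicator B (s * x) * ennreal (gamma2_density b y * exp (t * y))"
    for y
  proof (cases "(x, y) \<in> Q")
    case True
    have "exp (- t * c) * exp (t * x) * exp (t * y) = exp (t * (x + y - c))"
      by (simp add: exp_add[symmetric] algebra_simps)
    also have "\<dots> \<ge> 1" using Q[OF True] by simp
    finally have "1 * gamma2_density b y \<le> exp (- t * c) * exp (t * x) * exp (t * y) * gamma2_density b y"
      by (rule mult_right_mono) (rule gamma2_density_nonneg[OF b])
    then have "gamma2_density b y \<le> exp (- t * c) * exp (t * x) * (gamma2_density b y * exp (t * y))"
      by (simp add: mult_ac)
    then show ?thesis using True Q[OF True]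
      by (simp add: s_def ennreal_leI ennreal_mult'[symmetric])
  qed simp
  then have "(\<integral>\<^sup>+y. ennreal (gamma2_density b y) * indicator Q (x, y) \<partial>lborel)
      \<le> (\<integral>\<^sup>+y. ennreal (exp (- t * c) * exp (t * x)) * indicator B (s * x)
                  * ennreal (gamma2_density b y * exp (t * y)) \<partial>lborel)"
    by (rule nn_integral_mono)
  also have "\<dots> = ennreal (exp (- t * c) * exp (t * x)) * indicator B (s * x) * ennreal (s powr (- b))"
    using b t by (simp add: nn_integral_cmult nn_integral_gamma2_density_exp s_def)
  also have "\<dots> = ennreal (exp (- t * c) * (1 - 2 * t) powr (- b) * exp (t * x)) * indicator B ((1 - 2 * t) * x)"
    by (simp add: s_def ennreal_mult mult_ac)
  finally show ?thesis .
qed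

lemma nn_integral_gamma2_density_pair_le:
  assumes a: "a > 0" and b: "b > 0" and t: "2 * t < 1" and [measurable]: "B \<in> sets borel"
    and Q: "\<And>x y. (x, y) \<in> Q \<Longrightarrow> (1 - 2 * t) * x \<in> B \<and> 0 \<le> t * (x + y - c)"
  shows "(\<integral>\<^sup>+x. ennreal (gamma2_density a x) * (\<integral>\<^sup>+y. ennreal (gamma2_density b y) * indicator Q (x, y) \<partial>lborel) \<partial>lborel)
       \<le> ennreal (exp (- t * c) * (1 - 2 * t) powr (- (a + b)))
           * (\<integral>\<^sup>+y. ennreal (gamma2_density a y) * indicator B y \<partial>lborel)"
proof -
  define K where "K = exp (- t * c) * (1 - 2 * t) powr (- b)"
  have K: "K \<ge> 0" by (simp add: K_def)
  have inner_le: "(\<integral>\<^sup>+y. ennreal (gamma2_density b y) * indicator Q (x, y) \<partial>lborel)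
      \<le> ennreal (K * exp (t * x)) * indicator B ((1 - 2 * t) * x)" for x
    unfolding K_def by (rule nn_integral_gamma2_density_section_le[OF b t Q])
  have "(\<integral>\<^sup>+x. ennreal (gamma2_density a x) * (\<integral>\<^sup>+y. ennreal (gamma2_density b y) * indicator Q (x, y) \<partial>lborel) \<partial>lborel)
      \<le> (\<integral>\<^sup>+x. ennreal K * (ennreal (gamma2_density a x * exp (t * x)) * indicator B ((1 - 2 * t) * x)) \<partial>lborel)"
    using K gamma2_density_nonneg[OF a]
    by (intro nn_integral_mono order.trans[OF mult_left_mono[OF inner_le]]) (simp_all add: ennreal_mult mult_ac)
  also have "\<dots> = ennreal K * (ennreal ((1 - 2 * t) powr (- a))
                    * (\<integral>\<^sup>+y. ennreal (gamma2_density a y) * indicator B y \<partial>lborel))"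
    using a t by (simp add: nn_integral_cmult nn_integral_gamma2_density_tilted)
  also have "\<dots> = ennreal (K * (1 - 2 * t) powr (- a))
                    * (\<integral>\<^sup>+y. ennreal (gamma2_density a y) * indicator B y \<partial>lborel)"
    using K by (simp add: ennreal_mult mult.assoc)
  also have "K * (1 - 2 * t) powr (- a) = exp (- t * c) * (1 - 2 * t) powr (- (a + b))"
    by (simp add: K_def powr_add[symmetric] mult.assoc add.commute)
  finally show ?thesis .
qed

lemma (in prob_space) chi2_pair_tilted_bound:
  assumes ind: "indep_var lborel S lborel T"
    and dS: "distributed M lborel S (\<lambda>x. ennreal (chi2_density k x))"
    and dT: "distributed M lborel T (\<lambda>x. ennreal (chi2_density l x))"
    and "k > 0" and "l > 0" and t: "2 * t < 1" and [measurable]: "B \<in> sets borel"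
    and E: "\<And>\<omega>. \<omega> \<in> E \<Longrightarrow> (1 - 2 * t) * S \<omega> \<in> B \<and> 0 \<le> t * (S \<omega> + T \<omega> - c)"
  shows "measure M E
         \<le> exp (- t * c) * measure (chi2_distr k) B / (1 - 2 * t) powr (real (k + l) / 2)"
proof -
  define a b where "a = real k / 2" and "b = real l / 2"
  have a: "a > 0" and b: "b > 0" using assms by (simp_all add: a_def b_def)
  have [measurable]: "S \<in> borel_measurable M" "T \<in> borel_measurable M"
    using distributed_measurable[OF dS] distributed_measurable[OF dT] by auto
  define Q where "Q = {p :: real \<times> real. (1 - 2 * t) * fst p \<in> B \<and> 0 \<le> t * (fst p + snd p - c)}"
  have [measurable]: "Q \<in> sets (lborel \<Otimes>\<^sub>M lborel)"
  proof -
    have "{p \<in> space (lborel \<Otimes>\<^sub>M lborel). (1 - 2 * t) * fst p \<in> B \<and> 0 \<le> t * (fst p + snd p - c)}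
        \<in> sets (lborel \<Otimes>\<^sub>M lborel)"
      by measurable
    then show ?thesis by (simp add: Q_def space_pair_measure)
  qed
  have "emeasure M {\<omega> \<in> space M. (S \<omega>, T \<omega>) \<in> Q}
      = (\<integral>\<^sup>+\<omega>. indicator {\<omega> \<in> space M. (S \<omega>, T \<omega>) \<in> Q} \<omega> \<partial>M)"
    by (rule nn_integral_indicator[symmetric]) measurable
  also have "\<dots> = (\<integral>\<^sup>+\<omega>. indicator Q (S \<omega>, T \<omega>) \<partial>M)"
    by (rule nn_integral_cong) (simp add: indicator_def)
  also have "\<dots> = (\<integral>\<^sup>+x. ennreal (gamma2_density a x)
                      * (\<integral>\<^sup>+y. ennreal (gamma2_density b y) * indicator Q (x, y) \<partial>lborel) \<partial>lborel)"
    using dS dT unfolding a_def b_def chi2_density_eq_gamma2_density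
    by (intro nn_integral_indep_pair[OF ind]) simp_all
  also have "\<dots> \<le> ennreal (exp (- t * c) * (1 - 2 * t) powr (- (a + b)))
                    * (\<integral>\<^sup>+y. ennreal (gamma2_density a y) * indicator B y \<partial>lborel)"
    by (rule nn_integral_gamma2_density_pair_le[OF a b t]) (auto simp: Q_def)
  also have "(\<integral>\<^sup>+y. ennreal (gamma2_density a y) * indicator B y \<partial>lborel) = ennreal (measure (chi2_distr k) B)"
    using nn_integral_chi2_density_indicator[OF \<open>k > 0\<close>] by (simp add: a_def chi2_density_eq_gamma2_density)
  also have "ennreal (exp (- t * c) * (1 - 2 * t) powr (- (a + b))) * ennreal (measure (chi2_distr k) B)
      = ennreal (exp (- t * c) * (1 - 2 * t) powr (- (a + b)) * measure (chi2_distr k) B)"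
    by (simp add: ennreal_mult)
  also have "exp (- t * c) * (1 - 2 * t) powr (- (a + b)) * measure (chi2_distr k) B
      = exp (- t * c) * measure (chi2_distr k) B / (1 - 2 * t) powr (real (k + l) / 2)"
    unfolding powr_minus_divide by (simp add: a_def b_def add_divide_distrib)
  finally have bound: "measure M {\<omega> \<in> space M. (S \<omega>, T \<omega>) \<in> Q}
      \<le> exp (- t * c) * measure (chi2_distr k) B / (1 - 2 * t) powr (real (k + l) / 2)"
    by (simp add: emeasure_eq_measure ennreal_le_iff)
  show ?thesis
  proof (cases "E \<in> events")
    case True
    then have "E \<subseteq> {\<omega> \<in> space M. (S \<omega>, T \<omega>) \<in> Q}"
      using E sets.sets_into_space by (auto simp: Q_def)
    then show ?thesis
      by (intro order.trans[OF finite_measure_mono bound]) measurable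
  qed (simp add: measure_notin_sets)
qed

lemma (in finite_measure) measure_diff_INF_le:
  assumes "A \<in> sets M" and "B \<in> sets M" and "B \<subseteq> A" and "X \<noteq> {}"
    and "\<And>x. x \<in> X \<Longrightarrow> measure M (A - B) \<le> f x"
  shows "measure M A - (INF x\<in>X. f x) \<le> measure M B"
proof -
  have "measure M (A - B) \<le> (INF x\<in>X. f x)"
    using assms(4,5) by (rule cINF_greatest)
  then show ?thesis
    using finite_measure_Diff[OF assms(1-3)] by simp
qed

lemma (in prob_space) chi2_pair_intersection_bounds:
  fixes a b :: real
  assumes ind: "indep_var lborel S lborel T"
    and dS: "distributed M lborel S (\<lambda>x. ennreal (chi2_density k x))"
    and dT: "distributed M lborel T (\<lambda>x. ennreal (chi2_density l x))"
    and "k > 0" and "l > 0"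
  defines "E \<equiv> {\<omega> \<in> space M. a < S \<omega> \<and> b < S \<omega> + T \<omega>}"
  shows "measure M E \<le> (INF u\<in>{0..<1/2}. exp (- u * b) * chi2_gt k ((1 - 2 * u) * a)
                                          / (1 - 2 * u) powr (real (k + l) / 2))"
    and "measure M {\<omega> \<in> space M. a < S \<omega>}
           - (INF v\<in>{0..}. exp (v * b) * chi2_gt k ((1 + 2 * v) * a)
                              / (1 + 2 * v) powr (real (k + l) / 2)) \<le> measure M E"
    and "measure M {\<omega> \<in> space M. b < S \<omega> + T \<omega>}
           - (INF v\<in>{0..<1/2}. exp (- v * b) * chi2_le k ((1 - 2 * v) * a)
                                  / (1 - 2 * v) powr (real (k + l) / 2)) \<le> measure M E"
proof -
  have [measurable]: "S \<in> borel_measurable M" "T \<in> borel_measurable M"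
    using distributed_measurable[OF dS] distributed_measurable[OF dT] by auto
  note bound = chi2_pair_tilted_bound[OF ind dS dT \<open>k > 0\<close> \<open>l > 0\<close>]
  show "measure M E \<le> (INF u\<in>{0..<1/2}. exp (- u * b) * chi2_gt k ((1 - 2 * u) * a)
                                              / (1 - 2 * u) powr (real (k + l) / 2))"
    unfolding chi2_gt_def
    by (intro cINF_greatest bound) (auto simp: E_def intro: mult_strict_left_mono)
  show "measure M {\<omega> \<in> space M. a < S \<omega>}
      - (INF v\<in>{0..}. exp (v * b) * chi2_gt k ((1 + 2 * v) * a)
                         / (1 + 2 * v) powr (real (k + l) / 2)) \<le> measure M E"
  proof (rule measure_diff_INF_le)
    fix v :: real
    assume "v \<in> {0..}"
    then have "measure M ({\<omega> \<in> space M. a < S \<omega>} - E)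
        \<le> exp (- (- v) * b) * measure (chi2_distr k) {(1 - 2 * (- v)) * a<..}
           / (1 - 2 * (- v)) powr (real (k + l) / 2)"
      by (intro bound) (auto simp: E_def intro: mult_strict_left_mono mult_nonneg_nonpos)
    then show "measure M ({\<omega> \<in> space M. a < S \<omega>} - E)
        \<le> exp (v * b) * chi2_gt k ((1 + 2 * v) * a) / (1 + 2 * v) powr (real (k + l) / 2)"
      by (simp add: chi2_gt_def)
  qed (auto simp: E_def)
  show "measure M {\<omega> \<in> space M. b < S \<omega> + T \<omega>}
      - (INF v\<in>{0..<1/2}. exp (- v * b) * chi2_le k ((1 - 2 * v) * a)
                             / (1 - 2 * v) powr (real (k + l) / 2)) \<le> measure M E"
    unfolding chi2_le_def
    by (rule measure_diff_INF_le; (rule bound)?) (auto simp: E_def intro: mult_left_mono)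
qed

lemma (in prob_space) std_normal_blocks:
  assumes ind: "indep_vars (\<lambda>_. borel) z UNIV"
    and norm: "\<And>i. distributed M lborel (z i) (\<lambda>x. ennreal (std_normal_density x))"
    and "m > 0" and "n > 0"
  shows "indep_var lborel (\<lambda>\<omega>. \<Sum>j=1..m. (z j \<omega>)\<^sup>2) lborel (\<lambda>\<omega>. \<Sum>j=m+1..m+n. (z j \<omega>)\<^sup>2)"
    and "distributed M lborel (\<lambda>\<omega>. \<Sum>j=1..m. (z j \<omega>)\<^sup>2) (\<lambda>x. ennreal (chi2_density m x))"
    and "distributed M lborel (\<lambda>\<omega>. \<Sum>j=m+1..m+n. (z j \<omega>)\<^sup>2) (\<lambda>x. ennreal (chi2_density n x))"
proof -
  show "indep_var lborel (\<lambda>\<omega>. \<Sum>j=1..m. (z j \<omega>)\<^sup>2) lborel (\<lambda>\<omega>. \<Sum>j=m+1..m+n. (z j \<omega>)\<^sup>2)"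
    by (rule indep_var_sum_squares[OF ind]) auto
  show "distributed M lborel (\<lambda>\<omega>. \<Sum>j=1..m. (z j \<omega>)\<^sup>2) (\<lambda>x. ennreal (chi2_density m x))"
    using distributed_sum_squares_std_normal[of "{1..m}" z] indep_vars_subset[OF ind] norm \<open>m > 0\<close>
    by simp
  show "distributed M lborel (\<lambda>\<omega>. \<Sum>j=m+1..m+n. (z j \<omega>)\<^sup>2) (\<lambda>x. ennreal (chi2_density n x))"
    using distributed_sum_squares_std_normal[of "{m+1..m+n}" z] indep_vars_subset[OF ind] norm \<open>n > 0\<close>
    by simp
qed

theorem lemma1:
  fixes M :: "'a measure" and z :: "nat \<Rightarrow> 'a \<Rightarrow> real"
    and I1 I2 N1 N2 :: nat and r1 r2 :: real
  assumes "prob_space M"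
    and "prob_space.indep_vars M (\<lambda>_. borel) z UNIV"
    and "\<And>i. distributed M lborel (z i) (\<lambda>x. ennreal (std_normal_density x))"
    and "I1 > 0" and "I2 > 0"
    and "N1 = I1" and "N2 = I1 + I2"
    and "r1 > 0" and "r2 > 0"
  shows
    "measure M {\<omega> \<in> space M. (\<Sum>j=1..N1. (z j \<omega>)\<^sup>2) > r1\<^sup>2 \<and> (\<Sum>j=1..N2. (z j \<omega>)\<^sup>2) > r2\<^sup>2}
       \<le> (INF u\<in>{0..<1/2}. exp (- u * r2\<^sup>2) * chi2_gt I1 ((1 - 2 * u) * r1\<^sup>2)
                              / (1 - 2 * u) powr (real N2 / 2))
     \<and> measure M {\<omega> \<in> space M. (\<Sum>j=1..N1. (z j \<omega>)\<^sup>2) > r1\<^sup>2 \<and> (\<Sum>j=1..N2. (z j \<omega>)\<^sup>2) > r2\<^sup>2}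
       \<ge> max (measure M {\<omega> \<in> space M. (\<Sum>j=1..N1. (z j \<omega>)\<^sup>2) > r1\<^sup>2}
                - (INF v\<in>{(0::real)..}. exp (v * r2\<^sup>2) * chi2_gt I1 ((1 + 2 * v) * r1\<^sup>2)
                                  / (1 + 2 * v) powr (real N2 / 2)))
               (measure M {\<omega> \<in> space M. (\<Sum>j=1..N2. (z j \<omega>)\<^sup>2) > r2\<^sup>2}
                - (INF v\<in>{0..<1/2}. exp (- v * r2\<^sup>2) * chi2_le I1 ((1 - 2 * v) * r1\<^sup>2)
                                  / (1 - 2 * v) powr (real N2 / 2)))"
proof -
  interpret prob_space M by fact
  define S T where "S = (\<lambda>\<omega>. \<Sum>j=1..I1. (z j \<omega>)\<^sup>2)" and "T = (\<lambda>\<omega>. \<Sum>j=I1+1..I1+I2. (z j \<omega>)\<^sup>2)"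
  have sums: "(\<Sum>j=1..N1. (z j \<omega>)\<^sup>2) = S \<omega>" "(\<Sum>j=1..N2. (z j \<omega>)\<^sup>2) = S \<omega> + T \<omega>" for \<omega>
    unfolding S_def T_def assms(6,7) by (simp, rule sum.ub_add_nat, simp)
  note blocks = std_normal_blocks[OF assms(2-5), folded S_def T_def]
  note bounds = chi2_pair_intersection_bounds[OF blocks assms(4,5), where a = "r1\<^sup>2" and b = "r2\<^sup>2"]
  show ?thesis
    unfolding sums unfolding assms(7) using bounds by simp
qed

end
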